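(* Suppose the assumptions on $F$, $\xi$ and $\pi$ below hold and fix $\varepsilon,\sigma>0$. Define, for $m\in\mathcal P(\mathcal X)$ and $x\in\mathcal X$, $$a(m,x):=\frac{\delta F}{\delta\mu}(m,x)+2\sigma\Big(K_\varepsilon*\frac{K_\varepsilon*m}{\pi}\Big)(x)-2\sigma\int_{\mathcal X}\Big(K_\varepsilon*\frac{K_\varepsilon*m}{\pi}\Big)(z)\,m(dz)$$ (the drift of the Fisher–Rao gradient flow of $V^\sigma_\varepsilon(m)=F(m)+\sigma\chi^2(K_\varepsilon*m\,|\,\pi)$, where $\chi^2(p|\pi)=\int(p/\pi-1)^2\pi\,dx$). Then there exist constants $M_a,L_a>0$ such that $|a(m,x)|\le M_a$ and $|a(m,x)-a(m',y)|\le L_a(|x-y|+\mathcal W_2(m,m'))$ for all $x,y\in\mathcal X$ and $m,m'\in\mathcal P_2(\mathcal X)$.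
   Context: $\mathcal X\subset\mathbb R^d$ is compact; $\mathcal W_p$ is the $p$-Wasserstein distance. Flat derivative: $F:\mathcal P(\mathcal X)\to\mathbb R$ admits a flat derivative $\frac{\delta F}{\delta\mu}:\mathcal P(\mathcal X)\times\mathcal X\to\mathbb R$ if it is continuous in the measure argument, suitably bounded, and $F(m')-F(m)=\int_0^1\int_{\mathcal X}\frac{\delta F}{\delta\mu}(m+\lambda(m'-m),x)(m'-m)(dx)\,d\lambda$ for all $m,m'$. Assumption on $F$: $F$ is lower semicontinuous w.r.t. weak convergence, bounded below by some $F_{\min}$, admits a flat derivative with $|\frac{\delta F}{\delta\mu}(\mu,x)|\le C_F$ and $|\frac{\delta F}{\delta\mu}(\mu,x)-\frac{\delta F}{\delta\mu}(\nu,y)|\le L_F(\mathcal W_2(\mu,\nu)+|x-y|)$ for all $\mu,\nu,x,y$. Assumption on the kernel: $\xi:\mathbb R^d\to\mathbb R_+$ is a smooth, Lipschitz, radial probability density with full support and finite second moment; $\xi_\varepsilon(z):=C_{\varepsilon,d}^{-1}\varepsilon^{-d}\xi(z/\varepsilon)$ where $C_{\varepsilon,d}=\int_{\mathcal X}\varepsilon^{-d}\xi(x/\varepsilon)dx$; $K_\varepsilon:=\xi_\varepsilon*\xi_\varepsilon$. For a measure $\mu$ on $\mathcal X$, $(K_\varepsilon*\mu)(x)=\int_{\mathcal X}K_\varepsilon(x-y)\mu(dy)$, and for a function $f$ on $\mathcal X$, $(K_\varepsilon*f)(x)=\int_{\mathcal X}K_\varepsilon(x-y)f(y)dy$. Assumption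 on $\pi$: $\pi$ is a probability density on $\mathcal X$, $\pi=e^{-U}$ with $U:\mathcal X\to\mathbb R$ continuous, and $\pi$ is Lipschitz on $\mathcal X$. *)

theory Defs
  imports "HOL-Analysis.Analysis" "HOL-Probability.Probability"
begin

fun Ck :: "nat \<Rightarrow> ('a::euclidean_space \<Rightarrow> real) \<Rightarrow> bool" where
  "Ck 0 f = continuous_on UNIV f"
| "Ck (Suc n) f = (\<exists>f'. (\<forall>x. (f has_derivative f' x) (at x)) \<and> (\<forall>v. Ck n (\<lambda>x. f' x v)))"

definition smooth_fun :: "('a::euclidean_space \<Rightarrow> real) \<Rightarrow> bool" where
  "smooth_fun f \<longleftrightarrow> (\<forall>n. Ck n f)"

text \<open>P(X): Borel probability measures on the ambient space concentrated on X.\<close>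
definition probs_on :: "'a::euclidean_space set \<Rightarrow> 'a measure set" where
  "probs_on X = {m. prob_space m \<and> sets m = sets borel \<and> emeasure m X = 1}"

definition couplings :: "'a::euclidean_space measure \<Rightarrow> 'a measure \<Rightarrow> ('a \<times> 'a) measure set" where
  "couplings \<mu> \<nu> = {\<gamma>. prob_space \<gamma> \<and> sets \<gamma> = sets (borel :: ('a \<times> 'a) measure)
      \<and> distr \<gamma> borel fst = \<mu> \<and> distr \<gamma> borel snd = \<nu>}"

definition W2 :: "'a::euclidean_space measure \<Rightarrow> 'a measure \<Rightarrow> real" where
  "W2 \<mu> \<nu> = sqrt (enn2real (INF \<gamma>\<in>couplings \<mu> \<nu>.
       \<integral>\<^sup>+ p. ennreal ((norm (fst p - snd p))\<^sup>2) \<partial>\<gamma>))"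

definition weak_conv :: "(nat \<Rightarrow> 'a::euclidean_space measure) \<Rightarrow> 'a measure \<Rightarrow> bool" where
  "weak_conv mn m \<longleftrightarrow> (\<forall>f :: 'a \<Rightarrow> real. continuous_on UNIV f \<and> bounded (range f) \<longrightarrow>
       (\<lambda>n. \<integral>x. f x \<partial>(mn n)) \<longlonglongrightarrow> (\<integral>x. f x \<partial>m))"

text \<open>The measure m + l (m' - m) = (1 - l) m + l m'.\<close>
definition mix :: "real \<Rightarrow> 'a::euclidean_space measure \<Rightarrow> 'a measure \<Rightarrow> 'a measure" where
  "mix l m m' = measure_of UNIV (sets borel)
     (\<lambda>A. ennreal (1 - l) * emeasure m A + ennreal l * emeasure m' A)"

definition assm_F :: "'a::euclidean_space set \<Rightarrow> ('a measure \<Rightarrow> real) \<Rightarrow> ('a measure \<Rightarrow> 'a \<Rightarrow> real)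
    \<Rightarrow> bool" where
  "assm_F X F dF \<longleftrightarrow>
     \<comment> \<open>lower semicontinuity w.r.t. weak convergence\<close>
     (\<forall>mn m. (\<forall>n. mn n \<in> probs_on X) \<and> m \<in> probs_on X \<and> weak_conv mn m \<longrightarrow>
         ereal (F m) \<le> liminf (\<lambda>n. ereal (F (mn n))))
     \<comment> \<open>bounded below\<close>
   \<and> (\<exists>Fmin. \<forall>m\<in>probs_on X. Fmin \<le> F m)
     \<comment> \<open>flat derivative: continuity in the measure argument\<close>
   \<and> (\<forall>mn m x. (\<forall>n. mn n \<in> probs_on X) \<and> m \<in> probs_on X \<and> x \<in> X \<and> weak_conv mn m \<longrightarrow>
         (\<lambda>n. dF (mn n) x) \<longlonglongrightarrow> dF m x)
     \<comment> \<open>flat derivative: defining identity\<close>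
   \<and> (\<forall>m\<in>probs_on X. \<forall>m'\<in>probs_on X.
         ((\<lambda>l. (\<integral>x. dF (mix l m m') x \<partial>m') - (\<integral>x. dF (mix l m m') x \<partial>m))
            has_integral (F m' - F m)) {0..1})
     \<comment> \<open>boundedness and Lipschitz bounds\<close>
   \<and> (\<exists>CF LF. (\<forall>m\<in>probs_on X. \<forall>x\<in>X. \<bar>dF m x\<bar> \<le> CF)
        \<and> (\<forall>m\<in>probs_on X. \<forall>m'\<in>probs_on X. \<forall>x\<in>X. \<forall>y\<in>X.
              \<bar>dF m x - dF m' y\<bar> \<le> LF * (W2 m m' + norm (x - y))))"

definition assm_xi :: "('a::euclidean_space \<Rightarrow> real) \<Rightarrow> bool" where
  "assm_xi \<xi> \<longleftrightarrow>
     smooth_fun \<xi> \<and> (\<exists>L. lipschitz_on L UNIV \<xi>)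
   \<and> (\<forall>x y. norm x = norm y \<longrightarrow> \<xi> x = \<xi> y)
   \<and> (\<forall>x. 0 \<le> \<xi> x) \<and> integrable lborel \<xi> \<and> (\<integral>x. \<xi> x \<partial>lborel) = 1
   \<and> closure {x. \<xi> x \<noteq> 0} = UNIV
   \<and> integrable lborel (\<lambda>z. (norm z)\<^sup>2 * \<xi> z)"

definition C_eps :: "'a::euclidean_space set \<Rightarrow> ('a \<Rightarrow> real) \<Rightarrow> real \<Rightarrow> real" where
  "C_eps X \<xi> \<epsilon> = (LINT x:X|lborel. \<epsilon> powi (- int DIM('a)) * \<xi> (x /\<^sub>R \<epsilon>))"

definition xi_eps :: "'a::euclidean_space set \<Rightarrow> ('a \<Rightarrow> real) \<Rightarrow> real \<Rightarrow> 'a \<Rightarrow> real" where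
  "xi_eps X \<xi> \<epsilon> z = inverse (C_eps X \<xi> \<epsilon>) * \<epsilon> powi (- int DIM('a)) * \<xi> (z /\<^sub>R \<epsilon>)"

definition K_eps :: "'a::euclidean_space set \<Rightarrow> ('a \<Rightarrow> real) \<Rightarrow> real \<Rightarrow> 'a \<Rightarrow> real" where
  "K_eps X \<xi> \<epsilon> z = (\<integral>w. xi_eps X \<xi> \<epsilon> (z - w) * xi_eps X \<xi> \<epsilon> w \<partial>lborel)"

definition conv_meas :: "('a::euclidean_space \<Rightarrow> real) \<Rightarrow> 'a measure \<Rightarrow> 'a \<Rightarrow> real" where
  "conv_meas K \<mu> x = (\<integral>y. K (x - y) \<partial>\<mu>)"

definition conv_fun :: "'a::euclidean_space set \<Rightarrow> ('a \<Rightarrow> real) \<Rightarrow> ('a \<Rightarrow> real) \<Rightarrow> 'a \<Rightarrow> real" where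
  "conv_fun X K f x = (LINT y:X|lborel. K (x - y) * f y)"

definition assm_pi :: "'a::euclidean_space set \<Rightarrow> ('a \<Rightarrow> real) \<Rightarrow> bool" where
  "assm_pi X \<pi> \<longleftrightarrow>
     (\<exists>U. continuous_on X U \<and> (\<forall>x\<in>X. \<pi> x = exp (- U x)))
   \<and> set_integrable lborel X \<pi> \<and> (LINT x:X|lborel. \<pi> x) = 1
   \<and> (\<exists>L. lipschitz_on L X \<pi>)"

definition drift :: "'a::euclidean_space set \<Rightarrow> ('a measure \<Rightarrow> 'a \<Rightarrow> real) \<Rightarrow> ('a \<Rightarrow> real)
    \<Rightarrow> ('a \<Rightarrow> real) \<Rightarrow> real \<Rightarrow> real \<Rightarrow> 'a measure \<Rightarrow> 'a \<Rightarrow> real" where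
  "drift X dF \<xi> \<pi> \<epsilon> \<sigma> m x =
     (let K = K_eps X \<xi> \<epsilon>;
          g = conv_fun X K (\<lambda>y. conv_meas K m y / \<pi> y)
      in dF m x + 2 * \<sigma> * g x - 2 * \<sigma> * (\<integral>z. g z \<partial>m))"

end

(*
  Every term of the drift is a bounded field a(m, x) that is Lipschitz in x uniformly in m and
  Lipschitz in m for W2 uniformly in x, and such fields are closed under sums, scalar multiples,
  multiplication by bounded Lipschitz functions, convolution with a Lipschitz kernel over the
  compact set X, and integration against m itself.  The flat derivative is such a field by
  assumption.  The mollifier K = xi_eps * xi_eps is Lipschitz because xi_eps is, so K * m is such
  a field: its W2-Lipschitz bound is the estimate |int h dm - int h dm'| <= L W2(m, m') for
  L-Lipschitz h, which follows from W1 <= W2 (Cauchy-Schwarz under any coupling).  Dividing by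
  pi = exp(-U), which is Lipschitz and bounded away from 0 on the compact X, preserves the
  property, and so do the remaining convolution and integration steps.
*)
theory Submission
  imports Defs
begin

section \<open>Probability measures on a compact set and the W2 distance\<close>

lemma probs_on_nonempty: "m \<in> probs_on X \<Longrightarrow> X \<noteq> {}"
  by (auto simp: probs_on_def)

lemma probs_on_measurable:
  assumes "m \<in> probs_on X" "f \<in> borel \<rightarrow>\<^sub>M N"
  shows "f \<in> m \<rightarrow>\<^sub>M N"
proof -
  have "sets m = sets borel" using assms(1) by (simp add: probs_on_def)
  then show ?thesis using assms(2) measurable_cong_sets by blast
qed

lemma probs_on_AE_mem:
  assumes "closed X" "m \<in> probs_on X"
  shows "AE x in m. x \<in> X"
proof -
  interpret prob_space m using assms(2) by (simp add: probs_on_def)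
  have "prob X = 1"
    using assms(2) by (simp add: probs_on_def measure_def)
  then show ?thesis by (rule AE_prob_1)
qed

lemma probs_on_integrable_bounded:
  fixes h :: "'a::euclidean_space \<Rightarrow> real"
  assumes "closed X" "m \<in> probs_on X" "h \<in> borel_measurable borel" "\<forall>x\<in>X. \<bar>h x\<bar> \<le> B"
  shows "integrable m h" "\<bar>\<integral>x. h x \<partial>m\<bar> \<le> B"
proof -
  interpret prob_space m using assms(2) by (simp add: probs_on_def)
  have bound: "AE x in m. \<bar>h x\<bar> \<le> B" using probs_on_AE_mem[OF assms(1,2)] assms(4) by auto
  have "h \<in> borel_measurable m" using assms(2,3) by (rule probs_on_measurable)
  with bound show int: "integrable m h" by (intro integrable_const_bound[where B=B]) auto
  have "\<bar>\<integral>x. h x \<partial>m\<bar> \<le> (\<integral>x. \<bar>h x\<bar> \<partial>m)" by (rule integral_abs_bound)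
  also have "\<dots> \<le> B" using int bound by (intro integral_le_const) auto
  finally show "\<bar>\<integral>x. h x \<partial>m\<bar> \<le> B" .
qed

lemma probs_on_integrable_continuous:
  fixes h :: "'a::euclidean_space \<Rightarrow> real"
  assumes "compact X" "m \<in> probs_on X" "h \<in> borel_measurable borel" "continuous_on X h"
  shows "integrable m h"
proof -
  obtain B where "\<forall>x\<in>X. \<bar>h x\<bar> \<le> B"
    using compact_imp_bounded[OF compact_continuous_image[OF assms(4,1)]] by (auto simp: bounded_iff)
  then show ?thesis
    using probs_on_integrable_bounded(1)[OF compact_imp_closed[OF assms(1)] assms(2,3)] by blast
qed

lemma couplingsD:
  fixes m m' :: "'a::euclidean_space measure"
  assumes "\<gamma> \<in> couplings m m'"
  shows "prob_space \<gamma>" "sets \<gamma> = sets borel" "fst \<in> measurable \<gamma> borel" "snd \<in> measurable \<gamma> borel"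
    "distr \<gamma> borel fst = m" "distr \<gamma> borel snd = m'"
proof -
  show sets: "sets \<gamma> = sets borel"
    using assms by (simp add: couplings_def)
  have "fst \<in> measurable (borel :: ('a \<times> 'a) measure) borel"
    "snd \<in> measurable (borel :: ('a \<times> 'a) measure) borel"
    by (simp_all add: borel_prod[symmetric])
  then show "fst \<in> measurable \<gamma> borel" "snd \<in> measurable \<gamma> borel"
    by (simp_all add: measurable_cong_sets[OF sets refl])
qed (use assms in \<open>simp_all add: couplings_def\<close>)

lemma couplings_AE_mem:
  assumes "closed X" "m \<in> probs_on X" "m' \<in> probs_on X" "\<gamma> \<in> couplings m m'"
  shows "AE p in \<gamma>. fst p \<in> X \<and> snd p \<in> X"
proof -
  note \<gamma> = couplingsD[OF assms(4)]
  have X: "{x \<in> space borel. x \<in> X} \<in> sets borel" using assms(1) by simp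
  have "AE x in distr \<gamma> borel fst. x \<in> X" "AE x in distr \<gamma> borel snd. x \<in> X"
    using probs_on_AE_mem[OF assms(1,2)] probs_on_AE_mem[OF assms(1,3)] by (simp_all only: \<gamma>(5,6))
  then have "AE p in \<gamma>. fst p \<in> X" "AE p in \<gamma>. snd p \<in> X"
    by (simp_all only: AE_distr_iff[OF \<gamma>(3) X] AE_distr_iff[OF \<gamma>(4) X])
  then show ?thesis by (rule AE_conjI)
qed

lemma integral_couplings:
  fixes h :: "'a::euclidean_space \<Rightarrow> real"
  assumes "\<gamma> \<in> couplings m m'" "h \<in> borel_measurable borel"
  shows "(\<integral>x. h x \<partial>m) = (\<integral>p. h (fst p) \<partial>\<gamma>)" "(\<integral>x. h x \<partial>m') = (\<integral>p. h (snd p) \<partial>\<gamma>)"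
  using integral_distr[OF couplingsD(3)[OF assms(1)] assms(2)]
    integral_distr[OF couplingsD(4)[OF assms(1)] assms(2)]
  by (simp_all add: couplingsD(5,6)[OF assms(1)])

lemma integrable_couplings:
  fixes h :: "'a::euclidean_space \<times> 'a \<Rightarrow> real"
  assumes "compact X" "m \<in> probs_on X" "m' \<in> probs_on X" "\<gamma> \<in> couplings m m'"
    "h \<in> borel_measurable borel" "continuous_on (X \<times> X) h"
  shows "integrable \<gamma> h"
proof -
  interpret prob_space \<gamma> by (rule couplingsD(1)[OF assms(4)])
  obtain B where B: "\<forall>p\<in>X \<times> X. \<bar>h p\<bar> \<le> B"
    using compact_imp_bounded[OF compact_continuous_image[OF assms(6) compact_Times[OF assms(1,1)]]]
    by (auto simp: bounded_iff)
  have "h \<in> borel_measurable \<gamma>"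
    using assms(5) measurable_cong_sets[OF couplingsD(2)[OF assms(4)] refl] by blast
  moreover have "AE p in \<gamma>. \<bar>h p\<bar> \<le> B"
    using couplings_AE_mem[OF compact_imp_closed[OF assms(1)] assms(2-4)] B
    by (force simp: mem_Times_iff)
  ultimately show ?thesis by (intro integrable_const_bound[where B=B]) auto
qed

lemma pair_measure_in_couplings:
  assumes "m \<in> probs_on X" "m' \<in> probs_on X"
  shows "m \<Otimes>\<^sub>M m' \<in> couplings m m'"
proof -
  interpret p: pair_prob_space m m'
    using assms by (simp add: probs_on_def pair_prob_space_def pair_sigma_finite_def
        prob_space_imp_sigma_finite)
  have sets: "sets m = sets borel" "sets m' = sets borel"
    using assms by (simp_all add: probs_on_def)
  have "distr (m \<Otimes>\<^sub>M m') borel fst = distr (m \<Otimes>\<^sub>M m') m fst"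
    by (rule distr_cong) (simp_all add: sets)
  also have "\<dots> = m" by (rule p.M2.distr_pair_fst)
  finally have fst: "distr (m \<Otimes>\<^sub>M m') borel fst = m" .
  have "distr (m \<Otimes>\<^sub>M m') borel snd = distr (m \<Otimes>\<^sub>M m') m' snd"
    by (rule distr_cong) (simp_all add: sets)
  also have "\<dots> = m'"
  proof (rule measure_eqI)
    fix A assume "A \<in> sets (distr (m \<Otimes>\<^sub>M m') m' snd)"
    then have A: "A \<in> sets m'" by simp
    then have "snd -` A \<inter> space (m \<Otimes>\<^sub>M m') = space m \<times> A"
      using sets.sets_into_space by (auto simp: space_pair_measure)
    then show "emeasure (distr (m \<Otimes>\<^sub>M m') m' snd) A = emeasure m' A"
      using A p.M2.emeasure_pair_measure_Times[OF sets.top[of m] A]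
      by (simp add: emeasure_distr p.M1.emeasure_space_1)
  qed simp
  finally have snd: "distr (m \<Otimes>\<^sub>M m') borel snd = m'" .
  have "sets (m \<Otimes>\<^sub>M m') = sets borel"
    using sets by (metis borel_prod sets_pair_measure_cong)
  with fst snd show ?thesis
    using p.prob_space_axioms by (simp add: couplings_def)
qed

lemma diagonal_in_couplings:
  fixes m :: "'a::euclidean_space measure"
  assumes "m \<in> probs_on X"
  shows "distr m borel (\<lambda>x. (x, x)) \<in> couplings m m"
proof -
  have sets: "sets m = sets borel" and "prob_space m" using assms by (simp_all add: probs_on_def)
  have diag: "(\<lambda>x. (x, x)) \<in> measurable m borel"
    by (intro probs_on_measurable[OF assms] borel_measurable_continuous_onI continuous_intros)
  have "distr (distr m borel (\<lambda>x. (x, x))) borel fst = m"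
    "distr (distr m borel (\<lambda>x. (x, x))) borel snd = m"
  proof -
    have "fst \<in> borel_measurable (borel :: ('a \<times> 'a) measure)"
      "snd \<in> borel_measurable (borel :: ('a \<times> 'a) measure)"
      by (simp_all add: borel_prod[symmetric])
    then show "distr (distr m borel (\<lambda>x. (x, x))) borel fst = m"
      "distr (distr m borel (\<lambda>x. (x, x))) borel snd = m"
      by (simp_all add: distr_distr[OF _ diag] comp_def distr_id2[OF sets[symmetric]])
  qed
  then show ?thesis
    using prob_space.prob_space_distr[OF \<open>prob_space m\<close> diag] by (simp add: couplings_def)
qed

lemma W2_nonneg: "0 \<le> W2 m m'"
  by (simp add: W2_def)

lemma W2_self:
  fixes m :: "'a::euclidean_space measure"
  assumes "m \<in> probs_on X"
  shows "W2 m m = 0"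
proof -
  have diag: "(\<lambda>x. (x, x)) \<in> measurable m borel"
    by (intro probs_on_measurable[OF assms] borel_measurable_continuous_onI continuous_intros)
  have "(\<integral>\<^sup>+ p. ennreal ((norm (fst p - snd p))\<^sup>2) \<partial>distr m borel (\<lambda>x. (x, x))) = 0"
  proof -
    have "(\<lambda>p::'a \<times> 'a. (norm (fst p - snd p))\<^sup>2) \<in> borel_measurable borel"
      by (intro borel_measurable_continuous_onI continuous_intros)
    then show ?thesis by (subst nn_integral_distr[OF diag]) simp_all
  qed
  then have "(INF \<gamma>\<in>couplings m m. \<integral>\<^sup>+ p. ennreal ((norm (fst p - snd p))\<^sup>2) \<partial>\<gamma>) = 0"
    using INF_lower[OF diagonal_in_couplings[OF assms],
        of "\<lambda>\<gamma>. \<integral>\<^sup>+ p. ennreal ((norm (fst p - snd p))\<^sup>2) \<partial>\<gamma>"]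
    by simp
  then show ?thesis by (simp add: W2_def)
qed

lemma integral_diff_sq_le_coupling_cost:
  fixes h :: "'a::euclidean_space \<Rightarrow> real"
  assumes "compact X" "m \<in> probs_on X" "m' \<in> probs_on X" "\<gamma> \<in> couplings m m'"
    "L-lipschitz_on X h" "h \<in> borel_measurable borel"
  shows "((\<integral>x. h x \<partial>m) - (\<integral>x. h x \<partial>m'))\<^sup>2 \<le> L\<^sup>2 * (\<integral>p. (norm (fst p - snd p))\<^sup>2 \<partial>\<gamma>)"
proof -
  interpret prob_space \<gamma> by (rule couplingsD(1)[OF assms(4)])
  note int = integrable_couplings[OF assms(1-4)]
  have fst: "fst \<in> borel_measurable (borel :: ('a \<times> 'a) measure)"
    and snd: "snd \<in> borel_measurable (borel :: ('a \<times> 'a) measure)"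
    by (simp_all add: borel_prod[symmetric])
  have cont: "continuous_on X h" using assms(5) by (rule lipschitz_on_continuous_on)
  have "continuous_on (X \<times> X) (\<lambda>p. h (fst p))" "continuous_on (X \<times> X) (\<lambda>p. h (snd p))"
    by (rule continuous_on_compose2[OF cont continuous_on_fst[OF continuous_on_id]]
        continuous_on_compose2[OF cont continuous_on_snd[OF continuous_on_id]], force)+
  then have int_h: "integrable \<gamma> (\<lambda>p. h (fst p))" "integrable \<gamma> (\<lambda>p. h (snd p))"
    using int[OF measurable_compose[OF fst assms(6)]] int[OF measurable_compose[OF snd assms(6)]]
    by simp_all
  have int_dist: "integrable \<gamma> (\<lambda>p. norm (fst p - snd p))"
    and int_dist_sq: "integrable \<gamma> (\<lambda>p. (norm (fst p - snd p))\<^sup>2)"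
    by (auto intro!: int borel_measurable_continuous_onI continuous_intros)
  have "\<bar>(\<integral>x. h x \<partial>m) - (\<integral>x. h x \<partial>m')\<bar> = \<bar>\<integral>p. h (fst p) - h (snd p) \<partial>\<gamma>\<bar>"
    using int_h by (simp add: integral_couplings[OF assms(4,6)])
  also have "\<dots> \<le> (\<integral>p. \<bar>h (fst p) - h (snd p)\<bar> \<partial>\<gamma>)"
    by (rule integral_abs_bound)
  also have "\<dots> \<le> (\<integral>p. L * norm (fst p - snd p) \<partial>\<gamma>)"
  proof (rule integral_mono_AE)
    show "AE p in \<gamma>. \<bar>h (fst p) - h (snd p)\<bar> \<le> L * norm (fst p - snd p)"
      using couplings_AE_mem[OF compact_imp_closed[OF assms(1)] assms(2-4)]
      by eventually_elim (use lipschitz_on_normD[OF assms(5)] in auto)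
  qed (use int_h int_dist in auto)
  finally have "\<bar>(\<integral>x. h x \<partial>m) - (\<integral>x. h x \<partial>m')\<bar> \<le> L * (\<integral>p. norm (fst p - snd p) \<partial>\<gamma>)"
    by simp
  then have "((\<integral>x. h x \<partial>m) - (\<integral>x. h x \<partial>m'))\<^sup>2 \<le> L\<^sup>2 * (\<integral>p. norm (fst p - snd p) \<partial>\<gamma>)\<^sup>2"
    using power_mono[OF _ abs_ge_zero, of _ _ 2] by (fastforce simp: power_mult_distrib)
  also have "\<dots> \<le> L\<^sup>2 * (\<integral>p. (norm (fst p - snd p))\<^sup>2 \<partial>\<gamma>)"
    using variance_eq[OF int_dist int_dist_sq] variance_positive[of "\<lambda>p. norm (fst p - snd p)"]
    by (intro mult_left_mono) auto
  finally show ?thesis .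
qed

lemma sqrt_le_W2:
  fixes m m' :: "'a::euclidean_space measure"
  assumes "compact X" "m \<in> probs_on X" "m' \<in> probs_on X"
    "\<forall>\<gamma>\<in>couplings m m'. c \<le> (\<integral>p. (norm (fst p - snd p))\<^sup>2 \<partial>\<gamma>)"
  shows "sqrt c \<le> W2 m m'"
proof -
  define cost where "cost \<gamma> = (\<integral>\<^sup>+ p. ennreal ((norm (fst p - snd p))\<^sup>2) \<partial>\<gamma>)"
    for \<gamma> :: "('a \<times> 'a) measure"
  define I where "I = (INF \<gamma>\<in>couplings m m'. cost \<gamma>)"
  have cost: "cost \<gamma> = ennreal (\<integral>p. (norm (fst p - snd p))\<^sup>2 \<partial>\<gamma>)"
    if "\<gamma> \<in> couplings m m'" for \<gamma>
  proof -
    have "integrable \<gamma> (\<lambda>p. (norm (fst p - snd p))\<^sup>2)"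
      by (auto intro!: integrable_couplings[OF assms(1-3) that]
          borel_measurable_continuous_onI continuous_intros)
    then show ?thesis unfolding cost_def by (rule nn_integral_eq_integral) auto
  qed
  have c_le: "ennreal c \<le> I"
    unfolding I_def using assms(4) cost by (auto intro!: INF_greatest ennreal_leI)
  have fin: "I < \<top>"
    using INF_lower[OF pair_measure_in_couplings[OF assms(2,3)], of cost]
      cost[OF pair_measure_in_couplings[OF assms(2,3)]]
    unfolding I_def by (metis ennreal_less_top order.strict_trans1)
  have "c \<le> enn2real I"
  proof (cases "0 \<le> c")
    case True
    then show ?thesis using enn2real_mono[OF c_le fin] by simp
  qed (use enn2real_nonneg[of I] in linarith)
  then show ?thesis
    by (simp add: W2_def I_def cost_def)
qed

lemma abs_integral_diff_le_W2:
  fixes h :: "'a::euclidean_space \<Rightarrow> real"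
  assumes "compact X" "m \<in> probs_on X" "m' \<in> probs_on X"
    "L-lipschitz_on X h" "h \<in> borel_measurable borel"
  shows "\<bar>(\<integral>x. h x \<partial>m) - (\<integral>x. h x \<partial>m')\<bar> \<le> L * W2 m m'"
proof -
  define D where "D = (\<integral>x. h x \<partial>m) - (\<integral>x. h x \<partial>m')"
  have D_sq: "D\<^sup>2 \<le> L\<^sup>2 * (\<integral>p. (norm (fst p - snd p))\<^sup>2 \<partial>\<gamma>)" if "\<gamma> \<in> couplings m m'" for \<gamma>
    unfolding D_def by (rule integral_diff_sq_le_coupling_cost[OF assms(1-3) that assms(4,5)])
  show ?thesis
  proof (cases "L = 0")
    case True
    then show ?thesis
      using D_sq[OF pair_measure_in_couplings[OF assms(2,3)]] by (simp add: D_def)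
  next
    case False
    then have L: "0 < L" using lipschitz_on_nonneg[OF assms(4)] by simp
    have "sqrt (D\<^sup>2 / L\<^sup>2) \<le> W2 m m'"
      using D_sq L by (intro sqrt_le_W2[OF assms(1-3)]) (simp add: pos_divide_le_eq mult.commute)
    then show ?thesis
      using L by (simp add: D_def real_sqrt_divide divide_le_eq mult.commute)
  qed
qed

section \<open>Bounded fields that are Lipschitz in space and in W2\<close>

definition bounded_lipschitz_field ::
    "'a::euclidean_space set \<Rightarrow> real \<Rightarrow> real \<Rightarrow> ('a measure \<Rightarrow> 'a \<Rightarrow> real) \<Rightarrow> bool" where
  "bounded_lipschitz_field X B L a \<longleftrightarrow>
     (\<forall>m\<in>probs_on X. (\<forall>x\<in>X. \<bar>a m x\<bar> \<le> B) \<and> L-lipschitz_on X (a m)) \<and>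
     (\<forall>m\<in>probs_on X. \<forall>m'\<in>probs_on X. \<forall>x\<in>X. \<bar>a m x - a m' x\<bar> \<le> L * W2 m m')"

lemma bounded_lipschitz_field_mono:
  assumes "bounded_lipschitz_field X B L a" "B \<le> B'" "L \<le> L'"
  shows "bounded_lipschitz_field X B' L' a"
  using assms unfolding bounded_lipschitz_field_def
  by (meson lipschitz_on_le mult_right_mono order_trans W2_nonneg)

lemma bounded_lipschitz_field_add:
  assumes "bounded_lipschitz_field X B L a" "bounded_lipschitz_field X B' L' b"
  shows "bounded_lipschitz_field X (B + B') (L + L') (\<lambda>m x. a m x + b m x)"
  unfolding bounded_lipschitz_field_def
proof (intro conjI ballI)
  fix m x assume "m \<in> probs_on X" "x \<in> X"
  then show "\<bar>a m x + b m x\<bar> \<le> B + B'"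
    using assms by (fastforce simp: bounded_lipschitz_field_def)
next
  fix m assume "m \<in> probs_on X"
  then show "(L + L')-lipschitz_on X (\<lambda>x. a m x + b m x)"
    using assms by (simp add: bounded_lipschitz_field_def lipschitz_on_add)
next
  fix m m' x assume "m \<in> probs_on X" "m' \<in> probs_on X" "x \<in> X"
  then have "\<bar>a m x - a m' x\<bar> \<le> L * W2 m m'" "\<bar>b m x - b m' x\<bar> \<le> L' * W2 m m'"
    using assms by (auto simp: bounded_lipschitz_field_def)
  then show "\<bar>a m x + b m x - (a m' x + b m' x)\<bar> \<le> (L + L') * W2 m m'"
    by (simp add: distrib_right abs_le_iff)
qed

lemma bounded_lipschitz_field_cmult:
  assumes "bounded_lipschitz_field X B L a"
  shows "bounded_lipschitz_field X (\<bar>c\<bar> * B) (\<bar>c\<bar> * L) (\<lambda>m x. c * a m x)"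
  using assms unfolding bounded_lipschitz_field_def
  by (auto simp: abs_mult right_diff_distrib[symmetric] mult.assoc
      intro: mult_left_mono lipschitz_on_cmult_real)

lemma lipschitz_on_mult_bounded:
  fixes f g :: "'a::metric_space \<Rightarrow> real"
  assumes "L-lipschitz_on X f" "\<forall>x\<in>X. \<bar>f x\<bar> \<le> B" "M-lipschitz_on X g" "\<forall>x\<in>X. \<bar>g x\<bar> \<le> C"
    and "0 \<le> B" "0 \<le> C"
  shows "(L * C + B * M)-lipschitz_on X (\<lambda>x. f x * g x)"
proof (rule lipschitz_onI)
  fix x y assume xy: "x \<in> X" "y \<in> X"
  have "f x * g x - f y * g y = (f x - f y) * g x + f y * (g x - g y)"
    by (simp add: algebra_simps)
  then have "\<bar>f x * g x - f y * g y\<bar> \<le> \<bar>f x - f y\<bar> * \<bar>g x\<bar> + \<bar>f y\<bar> * \<bar>g x - g y\<bar>"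
    unfolding abs_mult[symmetric] by (simp only: abs_triangle_ineq)
  also have "\<dots> \<le> (L * dist x y) * C + B * (M * dist x y)"
    using lipschitz_onD[OF assms(1) xy] lipschitz_onD[OF assms(3) xy] assms(2,4,5) xy
      lipschitz_on_nonneg[OF assms(1)]
    by (intro add_mono mult_mono) (simp_all add: dist_real_def)
  finally show "dist (f x * g x) (f y * g y) \<le> (L * C + B * M) * dist x y"
    by (simp add: dist_real_def algebra_simps)
qed (use assms(5,6) lipschitz_on_nonneg[OF assms(1)] lipschitz_on_nonneg[OF assms(3)] in simp)

lemma bounded_lipschitz_field_mult:
  assumes "bounded_lipschitz_field X B L a" "L\<phi>-lipschitz_on X \<phi>" "\<forall>x\<in>X. \<bar>\<phi> x\<bar> \<le> C"
  shows "bounded_lipschitz_field X (B * C) (L * C + B * L\<phi>) (\<lambda>m x. a m x * \<phi> x)"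
proof -
  have a: "\<forall>x\<in>X. \<bar>a m x\<bar> \<le> B" "L-lipschitz_on X (a m)"
    and a_W2: "\<forall>x\<in>X. \<bar>a m x - a m' x\<bar> \<le> L * W2 m m'"
    and nonneg: "0 \<le> B" "0 \<le> C"
    if m: "m \<in> probs_on X" "m' \<in> probs_on X" for m m'
  proof -
    show a: "\<forall>x\<in>X. \<bar>a m x\<bar> \<le> B" "L-lipschitz_on X (a m)"
      and "\<forall>x\<in>X. \<bar>a m x - a m' x\<bar> \<le> L * W2 m m'"
      using assms(1) m by (simp_all add: bounded_lipschitz_field_def)
    obtain x0 where "x0 \<in> X" using probs_on_nonempty[OF m(1)] by blast
    then show "0 \<le> B" "0 \<le> C"
      using a(1) assms(3) abs_ge_zero[of "a m x0"] abs_ge_zero[of "\<phi> x0"] by fastforce+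
  qed
  show ?thesis
    unfolding bounded_lipschitz_field_def
  proof (intro conjI ballI)
    fix m x assume "m \<in> probs_on X" "x \<in> X"
    then show "\<bar>a m x * \<phi> x\<bar> \<le> B * C"
      using a(1) assms(3) nonneg by (simp add: abs_mult mult_mono)
  next
    fix m assume m: "m \<in> probs_on X"
    show "(L * C + B * L\<phi>)-lipschitz_on X (\<lambda>x. a m x * \<phi> x)"
      by (rule lipschitz_on_mult_bounded[OF a(2,1)[OF m m] assms(2,3) nonneg[OF m m]])
  next
    fix m m' x assume m: "m \<in> probs_on X" "m' \<in> probs_on X" and x: "x \<in> X"
    have "\<bar>a m x * \<phi> x - a m' x * \<phi> x\<bar> = \<bar>a m x - a m' x\<bar> * \<bar>\<phi> x\<bar>"
      by (simp add: abs_mult left_diff_distrib[symmetric])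
    also have "\<dots> \<le> (L * W2 m m') * C"
      using a_W2[OF m] assms(3) x nonneg[OF m] W2_nonneg[of m m'] lipschitz_on_nonneg[OF a(2)[OF m]]
      by (intro mult_mono) simp_all
    also have "\<dots> \<le> (L * C + B * L\<phi>) * W2 m m'"
      using nonneg[OF m] W2_nonneg[of m m'] lipschitz_on_nonneg[OF assms(2)]
      by (simp add: algebra_simps)
    finally show "\<bar>a m x * \<phi> x - a m' x * \<phi> x\<bar> \<le> (L * C + B * L\<phi>) * W2 m m'" .
  qed
qed

lemma bounded_lipschitz_field_diff:
  assumes "bounded_lipschitz_field X B L a" "bounded_lipschitz_field X B' L' b"
  shows "bounded_lipschitz_field X (B + B') (L + L') (\<lambda>m x. a m x - b m x)"
  using bounded_lipschitz_field_add[OF assms(1) bounded_lipschitz_field_cmult[OF assms(2), of "-1"]]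
  by simp

lemma bounded_lipschitz_field_joint:
  assumes "bounded_lipschitz_field X B L a" "m \<in> probs_on X" "m' \<in> probs_on X" "x \<in> X" "y \<in> X"
  shows "\<bar>a m x - a m' y\<bar> \<le> L * (norm (x - y) + W2 m m')"
proof -
  have "\<bar>a m x - a m y\<bar> \<le> L * norm (x - y)"
    using assms lipschitz_on_normD by (fastforce simp: bounded_lipschitz_field_def)
  moreover have "\<bar>a m y - a m' y\<bar> \<le> L * W2 m m'"
    using assms by (simp add: bounded_lipschitz_field_def)
  ultimately show ?thesis by (simp add: distrib_left)
qed

lemma bounded_lipschitz_field_integral:
  assumes "compact X" "bounded_lipschitz_field X B L g"
    "\<forall>m\<in>probs_on X. g m \<in> borel_measurable borel"
  shows "bounded_lipschitz_field X B (2 * L) (\<lambda>m x. \<integral>z. g m z \<partial>m)"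
proof -
  note int = probs_on_integrable_bounded[OF compact_imp_closed[OF assms(1)]]
  have g: "\<forall>x\<in>X. \<bar>g m x\<bar> \<le> B" "L-lipschitz_on X (g m)" "g m \<in> borel_measurable borel"
    if "m \<in> probs_on X" for m
    using assms(2,3) that by (simp_all add: bounded_lipschitz_field_def)
  show ?thesis
    unfolding bounded_lipschitz_field_def
  proof (intro conjI ballI)
    fix m x assume m: "m \<in> probs_on X"
    show "\<bar>\<integral>z. g m z \<partial>m\<bar> \<le> B"
      using int(2)[OF m g(3,1)[OF m]] .
    show "(2 * L)-lipschitz_on X (\<lambda>x. \<integral>z. g m z \<partial>m)"
      using lipschitz_on_nonneg[OF g(2)[OF m]]
      by (intro lipschitz_on_le[OF lipschitz_on_constant]) simp
  next
    fix m m' x assume m: "m \<in> probs_on X" and m': "m' \<in> probs_on X"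
    have "\<bar>\<integral>z. g m z - g m' z \<partial>m\<bar> \<le> L * W2 m m'"
      using assms(2) m m' g(3)[OF m] g(3)[OF m']
      by (intro int(2)[OF m]) (auto simp: bounded_lipschitz_field_def)
    moreover have "\<bar>(\<integral>z. g m' z \<partial>m) - (\<integral>z. g m' z \<partial>m')\<bar> \<le> L * W2 m m'"
      by (rule abs_integral_diff_le_W2[OF assms(1) m m' g(2,3)[OF m']])
    moreover have "integrable m (g m)" "integrable m (g m')"
      using int(1)[OF m g(3,1)[OF m]] int(1)[OF m g(3,1)[OF m']] .
    ultimately show "\<bar>(\<integral>z. g m z \<partial>m) - (\<integral>z. g m' z \<partial>m')\<bar> \<le> 2 * L * W2 m m'"
      by simp
  qed
qed

lemma assm_F_bounded_lipschitz_field: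
  assumes "assm_F X F dF"
  shows "\<exists>B L. bounded_lipschitz_field X B L dF"
proof -
  obtain B L where B: "\<forall>m\<in>probs_on X. \<forall>x\<in>X. \<bar>dF m x\<bar> \<le> B"
    and L: "\<forall>m\<in>probs_on X. \<forall>m'\<in>probs_on X. \<forall>x\<in>X. \<forall>y\<in>X.
              \<bar>dF m x - dF m' y\<bar> \<le> L * (W2 m m' + norm (x - y))"
    using assms unfolding assm_F_def by blast
  have "\<bar>dF m x - dF m' y\<bar> \<le> \<bar>L\<bar> * (W2 m m' + norm (x - y))"
    if "m \<in> probs_on X" "m' \<in> probs_on X" "x \<in> X" "y \<in> X" for m m' x y
    using L that W2_nonneg[of m m'] by (meson abs_ge_self add_nonneg_nonneg mult_right_mono norm_ge_zero order_trans)
  then have "bounded_lipschitz_field X B \<bar>L\<bar> dF"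
    using B by (fastforce simp: bounded_lipschitz_field_def lipschitz_on_def dist_norm W2_self
        simp flip: real_norm_def)
  then show ?thesis by blast
qed

section \<open>Lipschitz continuity of the mollifier\<close>

lemma lipschitz_nonneg_integrable_bdd_above:
  fixes f :: "'a::euclidean_space \<Rightarrow> real"
  assumes "L-lipschitz_on UNIV f" "\<forall>x. 0 \<le> f x" "integrable lborel f"
  shows "\<exists>B. \<forall>x. f x \<le> B"
proof -
  define r where "r = 1 / ((L + 1) * DIM('a))"
  have L: "0 \<le> L" using assms(1) by (rule lipschitz_on_nonneg)
  then have r: "0 < r" by (simp add: r_def)
  define c where "c = (2 * r) ^ DIM('a)"
  have c: "0 < c" using r by (simp add: c_def)
  have "f x0 \<le> 1 + integral\<^sup>L lborel f / c" for x0
  proof -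
    \<comment> \<open>f exceeds f x0 - 1 on a cube around x0 whose volume c depends only on L and the dimension\<close>
    define A where "A = cbox (x0 - r *\<^sub>R One) (x0 + r *\<^sub>R One)"
    have near: "f x0 - 1 \<le> f y" if "y \<in> A" for y
    proof -
      have "norm (y - x0) \<le> (\<Sum>b\<in>Basis. \<bar>(y - x0) \<bullet> b\<bar>)" by (rule norm_le_l1)
      also have "\<dots> \<le> (\<Sum>b\<in>(Basis::'a set). r)"
        using that by (intro sum_mono) (auto simp: A_def mem_box inner_diff_left algebra_simps)
      also have "\<dots> = 1 / (L + 1)" using L by (simp add: r_def)
      finally have "(L + 1) * norm (y - x0) \<le> 1"
        using L by (simp add: pos_le_divide_eq mult.commute)
      moreover have "\<bar>f y - f x0\<bar> \<le> L * norm (y - x0)"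
        using lipschitz_on_normD[OF assms(1)] by fastforce
      ultimately show ?thesis
        using norm_ge_zero[of "y - x0"] unfolding distrib_right abs_le_iff by linarith
    qed
    have "emeasure lborel A < \<infinity>"
      unfolding A_def by (rule emeasure_bounded_finite[OF bounded_cbox])
    moreover have "measure lborel A = c"
      using r by (simp add: A_def c_def measure_lborel_cbox_eq inner_diff_left inner_add_left
          algebra_simps prod_constant)
    ultimately have A: "emeasure lborel A < \<infinity>" "measure lborel A = c" .
    have "(f x0 - 1) * c = (\<integral>y. (f x0 - 1) * indicator A y \<partial>lborel)"
      using A by (simp add: A_def)
    also have "\<dots> \<le> integral\<^sup>L lborel f"
    proof (rule integral_mono[OF _ assms(3)])
      show "integrable lborel (\<lambda>y. (f x0 - 1) * indicator A y)"
        using A(1) by (simp add: A_def)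
    qed (use near assms(2) in \<open>auto simp: indicator_def\<close>)
    finally show ?thesis using c by (simp add: field_simps)
  qed
  then show ?thesis by blast
qed

lemma lborel_integrable_scaleR:
  fixes f :: "'a::euclidean_space \<Rightarrow> real"
  assumes "integrable lborel f" "c \<noteq> 0"
  shows "integrable lborel (\<lambda>x. f (c *\<^sub>R x))"
proof -
  have meas: "f \<in> borel_measurable borel" using assms(1) by simp
  have "(\<integral>\<^sup>+x. norm (f x) \<partial>lborel) = \<bar>c\<bar> ^ DIM('a) * (\<integral>\<^sup>+x. norm (f (c *\<^sub>R x)) \<partial>lborel)"
    using meas by (subst lborel_affine[OF assms(2), of 0])
      (simp add: nn_integral_density nn_integral_distr nn_integral_cmult)
  then show ?thesis
    using assms meas unfolding integrable_iff_bounded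
    by (auto simp: ennreal_mult_less_top ennreal_power[symmetric] power_eq_0_iff)
qed

lemma lipschitz_on_convolution:
  fixes f g :: "'a::euclidean_space \<Rightarrow> real"
  assumes "L-lipschitz_on UNIV f" "\<forall>x. \<bar>f x\<bar> \<le> B" "integrable lborel g"
  shows "(L * (\<integral>w. \<bar>g w\<bar> \<partial>lborel))-lipschitz_on UNIV (\<lambda>z. \<integral>w. f (z - w) * g w \<partial>lborel)"
proof (rule lipschitz_onI)
  have cont: "continuous_on UNIV f" using assms(1) by (rule lipschitz_on_continuous_on)
  have f_meas: "(\<lambda>w. f (z - w)) \<in> borel_measurable borel" for z
    by (intro borel_measurable_continuous_onI continuous_on_compose2[OF cont] continuous_intros) auto
  have int: "integrable lborel (\<lambda>w. f (z - w) * g w)" for z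
  proof (rule Bochner_Integration.integrable_bound)
    show "integrable lborel (\<lambda>w. B * g w)" using assms(3) by simp
    show "AE w in lborel. norm (f (z - w) * g w) \<le> norm (B * g w)"
    proof (rule AE_I2)
      fix w
      have "\<bar>f (z - w)\<bar> \<le> \<bar>B\<bar>" using assms(2) abs_ge_self order_trans by blast
      then show "norm (f (z - w) * g w) \<le> norm (B * g w)"
        by (simp add: abs_mult mult_right_mono)
    qed
  qed (use f_meas assms(3) in simp)
  fix z z' :: 'a
  have "dist (\<integral>w. f (z - w) * g w \<partial>lborel) (\<integral>w. f (z' - w) * g w \<partial>lborel)
      = \<bar>\<integral>w. (f (z - w) - f (z' - w)) * g w \<partial>lborel\<bar>"
    using int[of z] int[of z'] by (simp add: dist_real_def left_diff_distrib)
  also have "\<dots> \<le> (\<integral>w. \<bar>(f (z - w) - f (z' - w)) * g w\<bar> \<partial>lborel)"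
    by (rule integral_abs_bound)
  also have "\<dots> \<le> (\<integral>w. L * dist z z' * \<bar>g w\<bar> \<partial>lborel)"
  proof (rule integral_mono)
    show "integrable lborel (\<lambda>w. \<bar>(f (z - w) - f (z' - w)) * g w\<bar>)"
      using int[of z] int[of z'] by (simp add: left_diff_distrib)
    fix w
    have "\<bar>f (z - w) - f (z' - w)\<bar> \<le> L * dist z z'"
      using lipschitz_onD[OF assms(1), of "z - w" "z' - w"] by (simp add: dist_real_def dist_norm)
    then show "\<bar>(f (z - w) - f (z' - w)) * g w\<bar> \<le> L * dist z z' * \<bar>g w\<bar>"
      by (simp add: abs_mult mult_right_mono)
  qed (use assms(3) in simp)
  finally show "dist (\<integral>w. f (z - w) * g w \<partial>lborel) (\<integral>w. f (z' - w) * g w \<partial>lborel)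
      \<le> L * (\<integral>w. \<bar>g w\<bar> \<partial>lborel) * dist z z'"
    by (simp add: mult_ac)
qed (use lipschitz_on_nonneg[OF assms(1)] in simp)

lemma lipschitz_on_K_eps:
  assumes "assm_xi \<xi>" "0 < \<epsilon>"
  shows "\<exists>L. L-lipschitz_on UNIV (K_eps X \<xi> \<epsilon>)"
proof -
  obtain L where L: "L-lipschitz_on UNIV \<xi>" and nonneg: "\<forall>x. 0 \<le> \<xi> x"
    and int: "integrable lborel \<xi>"
    using assms(1) unfolding assm_xi_def by blast
  obtain B where B: "\<forall>x. \<xi> x \<le> B"
    using lipschitz_nonneg_integrable_bdd_above[OF L nonneg int] by blast
  define c where "c = inverse (C_eps X \<xi> \<epsilon>) * \<epsilon> powi (- int DIM('a))"
  have xi_eps: "xi_eps X \<xi> \<epsilon> = (\<lambda>z. c * \<xi> (inverse \<epsilon> *\<^sub>R z))"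
    by (rule ext) (simp add: xi_eps_def c_def)
  have "(L * (\<bar>inverse \<epsilon>\<bar> * 1))-lipschitz_on UNIV (\<lambda>z. \<xi> (inverse \<epsilon> *\<^sub>R z))"
    by (rule lipschitz_on_compose2[OF lipschitz_on_cmult[OF lipschitz_on_id]
          lipschitz_on_subset[OF L subset_UNIV]])
  then have lip: "(\<bar>c\<bar> * (L * (\<bar>inverse \<epsilon>\<bar> * 1)))-lipschitz_on UNIV (xi_eps X \<xi> \<epsilon>)"
    unfolding xi_eps by (rule lipschitz_on_cmult_real)
  have bdd: "\<forall>z. \<bar>xi_eps X \<xi> \<epsilon> z\<bar> \<le> \<bar>c\<bar> * B"
    using B nonneg by (simp add: xi_eps abs_mult mult_left_mono)
  have "integrable lborel (xi_eps X \<xi> \<epsilon>)"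
    using assms(2) unfolding xi_eps by (intro integrable_mult_right lborel_integrable_scaleR int) simp
  from lipschitz_on_convolution[OF lip bdd this] show ?thesis
    unfolding K_eps_def[abs_def] by blast
qed

section \<open>Convolutions with a Lipschitz kernel\<close>

lemma kernel_bounded_on_differences:
  fixes K :: "'a::euclidean_space \<Rightarrow> real"
  assumes "compact X" "continuous_on UNIV K"
  shows "\<exists>B. \<forall>x\<in>X. \<forall>y\<in>X. \<bar>K (x - y)\<bar> \<le> B"
proof -
  have "compact (K ` {x - y |x y. x \<in> X \<and> y \<in> X})"
    by (intro compact_continuous_image continuous_on_subset[OF assms(2)] compact_differences assms(1)) auto
  then have "bounded (K ` {x - y |x y. x \<in> X \<and> y \<in> X})" by (rule compact_imp_bounded)
  then obtain B where "\<forall>z\<in>K ` {x - y |x y. x \<in> X \<and> y \<in> X}. norm z \<le> B"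
    by (auto simp only: bounded_iff)
  then show ?thesis by (intro exI[of _ B]) auto
qed

lemma lipschitz_on_kernel_shift:
  fixes K :: "'a::euclidean_space \<Rightarrow> real"
  assumes "L-lipschitz_on UNIV K"
  shows "L-lipschitz_on UNIV (\<lambda>u. K (x - u))" "(\<lambda>u. K (x - u)) \<in> borel_measurable borel"
proof -
  have "1-lipschitz_on UNIV (\<lambda>u::'a. x - u)"
    by (rule lipschitz_onI) (simp_all add: dist_norm norm_minus_commute)
  from lipschitz_on_compose2[OF this lipschitz_on_subset[OF assms subset_UNIV]]
  show lip: "L-lipschitz_on UNIV (\<lambda>u. K (x - u))" by simp
  show "(\<lambda>u. K (x - u)) \<in> borel_measurable borel"
    by (rule borel_measurable_continuous_onI[OF lipschitz_on_continuous_on[OF lip]])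
qed

lemma lipschitz_on_conv_meas:
  assumes "compact X" "m \<in> probs_on X" "L-lipschitz_on UNIV K"
  shows "L-lipschitz_on UNIV (conv_meas K m)"
proof (rule lipschitz_onI)
  note shift = lipschitz_on_kernel_shift[OF assms(3)]
  fix x y :: 'a
  have int: "integrable m (\<lambda>u. K (z - u))" for z
    by (rule probs_on_integrable_continuous[OF assms(1,2) shift(2)
          continuous_on_subset[OF lipschitz_on_continuous_on[OF shift(1)] subset_UNIV]])
  have "(\<lambda>u. K (x - u) - K (y - u)) \<in> borel_measurable borel"
    using shift(2)[of x] shift(2)[of y] by (rule borel_measurable_diff)
  moreover have "\<forall>u\<in>X. \<bar>K (x - u) - K (y - u)\<bar> \<le> L * dist x y"
  proof
    fix u
    show "\<bar>K (x - u) - K (y - u)\<bar> \<le> L * dist x y"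
      using lipschitz_onD[OF assms(3), of "x - u" "y - u"] by (simp add: dist_real_def dist_norm)
  qed
  ultimately have "\<bar>\<integral>u. K (x - u) - K (y - u) \<partial>m\<bar> \<le> L * dist x y"
    by (rule probs_on_integrable_bounded(2)[OF compact_imp_closed[OF assms(1)] assms(2)])
  then show "dist (conv_meas K m x) (conv_meas K m y) \<le> L * dist x y"
    using int[of x] int[of y] by (simp add: conv_meas_def dist_real_def)
qed (rule lipschitz_on_nonneg[OF assms(3)])

lemma bounded_lipschitz_field_conv_meas:
  assumes "compact X" "L-lipschitz_on UNIV K" "\<forall>x\<in>X. \<forall>y\<in>X. \<bar>K (x - y)\<bar> \<le> B"
  shows "bounded_lipschitz_field X B L (conv_meas K)"
  unfolding bounded_lipschitz_field_def
proof (intro conjI ballI)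
  note shift = lipschitz_on_kernel_shift[OF assms(2)]
  fix m x assume m: "m \<in> probs_on X" and x: "x \<in> X"
  show "\<bar>conv_meas K m x\<bar> \<le> B"
    unfolding conv_meas_def
    using probs_on_integrable_bounded(2)[OF compact_imp_closed[OF assms(1)] m shift(2)] assms(3) x
    by blast
next
  fix m assume "m \<in> probs_on X"
  then show "L-lipschitz_on X (conv_meas K m)"
    using lipschitz_on_conv_meas[OF assms(1) _ assms(2)] lipschitz_on_subset by blast
next
  note shift = lipschitz_on_kernel_shift[OF assms(2)]
  fix m m' x assume "m \<in> probs_on X" "m' \<in> probs_on X" "x \<in> X"
  then show "\<bar>conv_meas K m x - conv_meas K m' x\<bar> \<le> L * W2 m m'"
    unfolding conv_meas_def
    using abs_integral_diff_le_W2[OF assms(1) _ _ lipschitz_on_subset[OF shift(1)] shift(2)] by blast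
qed

lemma set_integrable_compact:
  fixes \<phi> :: "'a::euclidean_space \<Rightarrow> real"
  assumes "compact X" "continuous_on X \<phi>"
  shows "set_integrable lborel X \<phi>"
  unfolding set_integrable_def using assms by (rule borel_integrable_compact)

lemma abs_set_integral_compact_le:
  fixes \<phi> :: "'a::euclidean_space \<Rightarrow> real"
  assumes "compact X" "continuous_on X \<phi>" "\<forall>y\<in>X. \<bar>\<phi> y\<bar> \<le> C"
  shows "\<bar>LINT y:X|lborel. \<phi> y\<bar> \<le> C * measure lborel X"
proof -
  have X: "X \<in> sets lborel" "emeasure lborel X \<noteq> \<infinity>"
    using borel_closed[OF compact_imp_closed[OF assms(1)]] emeasure_compact_finite[OF assms(1)]
    by simp_all
  have int: "set_integrable lborel X \<phi>" "set_integrable lborel X (\<lambda>_. C)"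
    using assms(1,2) by (simp_all add: set_integrable_compact)
  have "(LINT y:X|lborel. \<phi> y) \<le> (LINT y:X|lborel. C)"
    using assms(3) by (intro set_integral_mono int) auto
  moreover have "(LINT y:X|lborel. - \<phi> y) \<le> (LINT y:X|lborel. C)"
    using assms(3) by (intro set_integral_mono set_integrable_compact[OF assms(1)]
        continuous_on_minus assms(2) int(2)) auto
  moreover have "(LINT y:X|lborel. C) = C * measure lborel X"
    using set_integral_const[OF X, of C] by (simp add: mult.commute)
  ultimately show ?thesis
    by (simp add: set_integral_uminus[OF int(1)] abs_le_iff)
qed

lemma continuous_on_kernel_shift:
  fixes K :: "'a::euclidean_space \<Rightarrow> real"
  assumes "continuous_on UNIV K"
  shows "continuous_on A (\<lambda>y. K (x - y))"
  by (rule continuous_on_compose2[OF assms continuous_on_diff[OF continuous_on_const continuous_on_id]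
        subset_UNIV])

lemma abs_conv_fun_le:
  assumes "compact X" "continuous_on UNIV K" "continuous_on X f"
    "\<forall>y\<in>X. \<bar>K (x - y)\<bar> \<le> BK" "\<forall>y\<in>X. \<bar>f y\<bar> \<le> C"
  shows "\<bar>conv_fun X K f x\<bar> \<le> BK * C * measure lborel X"
  unfolding conv_fun_def
proof (rule abs_set_integral_compact_le[OF assms(1)])
  show "continuous_on X (\<lambda>y. K (x - y) * f y)"
    by (intro continuous_on_mult continuous_on_kernel_shift assms(2,3))
  show "\<forall>y\<in>X. \<bar>K (x - y) * f y\<bar> \<le> BK * C"
  proof
    fix y assume "y \<in> X"
    then have K: "\<bar>K (x - y)\<bar> \<le> BK" and f: "\<bar>f y\<bar> \<le> C" using assms(4,5) by simp_all
    have "0 \<le> BK" using K abs_ge_zero[of "K (x - y)"] by linarith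
    then show "\<bar>K (x - y) * f y\<bar> \<le> BK * C"
      unfolding abs_mult using K f by (simp add: mult_mono)
  qed
qed

lemma conv_fun_diff:
  assumes "compact X" "continuous_on UNIV K" "continuous_on X f" "continuous_on X g"
  shows "conv_fun X K f x - conv_fun X K g x = conv_fun X K (\<lambda>y. f y - g y) x"
proof -
  note int = set_integrable_compact[OF assms(1) continuous_on_mult[OF
        continuous_on_kernel_shift[OF assms(2)]]]
  have "conv_fun X K f x - conv_fun X K g x = (LINT y:X|lborel. K (x - y) * f y - K (x - y) * g y)"
    unfolding conv_fun_def by (rule set_integral_diff(2)[OF int[OF assms(3)] int[OF assms(4)], symmetric])
  also have "\<dots> = conv_fun X K (\<lambda>y. f y - g y) x"
    by (simp add: conv_fun_def right_diff_distrib)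
  finally show ?thesis .
qed

lemma lipschitz_on_conv_fun:
  assumes "compact X" "L-lipschitz_on UNIV K" "continuous_on X f" "\<forall>y\<in>X. \<bar>f y\<bar> \<le> B"
  shows "(L * B * measure lborel X)-lipschitz_on UNIV (conv_fun X K f)"
proof (rule lipschitz_onI)
  have shift: "continuous_on X (\<lambda>y. K (x - y))" for x
    by (rule continuous_on_kernel_shift[OF lipschitz_on_continuous_on[OF assms(2)]])
  fix x x' :: 'a
  have "conv_fun X K f x - conv_fun X K f x'
      = (LINT y:X|lborel. K (x - y) * f y - K (x' - y) * f y)"
    unfolding conv_fun_def
    by (rule set_integral_diff(2)[symmetric];
        intro set_integrable_compact[OF assms(1)] continuous_on_mult shift assms(3))
  also have "\<dots> = (LINT y:X|lborel. (K (x - y) - K (x' - y)) * f y)"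
    by (simp add: left_diff_distrib)
  finally have "dist (conv_fun X K f x) (conv_fun X K f x')
      = \<bar>LINT y:X|lborel. (K (x - y) - K (x' - y)) * f y\<bar>"
    by (simp add: dist_real_def)
  also have "\<dots> \<le> (L * dist x x' * B) * measure lborel X"
  proof (rule abs_set_integral_compact_le[OF assms(1)])
    show "continuous_on X (\<lambda>y. (K (x - y) - K (x' - y)) * f y)"
      by (intro continuous_on_mult continuous_on_diff shift assms(3))
    show "\<forall>y\<in>X. \<bar>(K (x - y) - K (x' - y)) * f y\<bar> \<le> L * dist x x' * B"
    proof
      fix y assume "y \<in> X"
      have "\<bar>K (x - y) - K (x' - y)\<bar> \<le> L * dist x x'"
        using lipschitz_onD[OF assms(2), of "x - y" "x' - y"] by (simp add: dist_real_def dist_norm)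
      then show "\<bar>(K (x - y) - K (x' - y)) * f y\<bar> \<le> L * dist x x' * B"
        unfolding abs_mult using assms(4) \<open>y \<in> X\<close> lipschitz_on_nonneg[OF assms(2)]
        by (intro mult_mono) simp_all
    qed
  qed
  finally show "dist (conv_fun X K f x) (conv_fun X K f x') \<le> L * B * measure lborel X * dist x x'"
    by (simp add: mult_ac)
next
  have "0 \<le> B * measure lborel X"
  proof (cases "X = {}")
    case False
    then obtain y where "y \<in> X" by blast
    then have "0 \<le> B" using assms(4) abs_ge_zero[of "f y"] by fastforce
    then show ?thesis by simp
  qed simp
  then show "0 \<le> L * B * measure lborel X"
    using lipschitz_on_nonneg[OF assms(2)] by (simp add: mult.assoc)
qed

lemma borel_measurable_conv_fun:
  assumes "compact X" "L-lipschitz_on UNIV K" "continuous_on X f"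
  shows "conv_fun X K f \<in> borel_measurable borel"
proof -
  obtain B where "\<forall>y\<in>X. \<bar>f y\<bar> \<le> B"
    using compact_imp_bounded[OF compact_continuous_image[OF assms(3,1)]] by (auto simp: bounded_iff)
  from lipschitz_on_conv_fun[OF assms this] show ?thesis
    by (intro borel_measurable_continuous_onI) (rule lipschitz_on_continuous_on)
qed

lemma bounded_lipschitz_field_conv_fun:
  assumes "compact X" "LK-lipschitz_on UNIV K" "\<forall>x\<in>X. \<forall>y\<in>X. \<bar>K (x - y)\<bar> \<le> BK"
    and f: "bounded_lipschitz_field X B L f"
  shows "bounded_lipschitz_field X (BK * B * measure lborel X) ((LK * B + BK * L) * measure lborel X)
      (\<lambda>m. conv_fun X K (f m))"
proof -
  have K: "continuous_on UNIV K" using assms(2) by (rule lipschitz_on_continuous_on)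
  have f_m: "\<forall>y\<in>X. \<bar>f m y\<bar> \<le> B" "continuous_on X (f m)"
    and nonneg: "0 \<le> B" "0 \<le> BK" "0 \<le> L"
    if m: "m \<in> probs_on X" for m
  proof -
    show f_m: "\<forall>y\<in>X. \<bar>f m y\<bar> \<le> B" "continuous_on X (f m)"
      using f m by (auto simp: bounded_lipschitz_field_def intro: lipschitz_on_continuous_on)
    obtain x0 where "x0 \<in> X" using probs_on_nonempty[OF m] by blast
    then show "0 \<le> B" "0 \<le> BK"
      using f_m(1) assms(3) abs_ge_zero[of "f m x0"] abs_ge_zero[of "K (x0 - x0)"] by fastforce+
    show "0 \<le> L"
      using f m by (auto simp: bounded_lipschitz_field_def dest: lipschitz_on_nonneg)
  qed
  have lip: "(LK * B * measure lborel X)-lipschitz_on UNIV (conv_fun X K (f m))"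
    if "m \<in> probs_on X" for m
    using lipschitz_on_conv_fun[OF assms(1,2) f_m(2,1)[OF that]] .
  show ?thesis
    unfolding bounded_lipschitz_field_def
  proof (intro conjI ballI)
    fix m x assume "m \<in> probs_on X" "x \<in> X"
    then show "\<bar>conv_fun X K (f m) x\<bar> \<le> BK * B * measure lborel X"
      using assms(3) f_m by (intro abs_conv_fun_le[OF assms(1) K]) simp_all
  next
    fix m assume m: "m \<in> probs_on X"
    show "((LK * B + BK * L) * measure lborel X)-lipschitz_on X (conv_fun X K (f m))"
      using nonneg[OF m] by (intro lipschitz_on_mono[OF lip[OF m]]) (simp_all add: algebra_simps)
  next
    fix m m' x assume m: "m \<in> probs_on X" "m' \<in> probs_on X" and x: "x \<in> X"
    have "\<bar>conv_fun X K (f m) x - conv_fun X K (f m') x\<bar>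
        = \<bar>conv_fun X K (\<lambda>y. f m y - f m' y) x\<bar>"
      using f_m m by (simp add: conv_fun_diff[OF assms(1) K])
    also have "\<dots> \<le> BK * (L * W2 m m') * measure lborel X"
      using f_m m f x assms(3)
      by (intro abs_conv_fun_le[OF assms(1) K] continuous_on_diff)
        (simp_all add: bounded_lipschitz_field_def)
    also have "\<dots> \<le> (LK * B + BK * L) * measure lborel X * W2 m m'"
      using nonneg[OF m(1)] lipschitz_on_nonneg[OF assms(2)] W2_nonneg[of m m']
      by (simp add: algebra_simps)
    finally show "\<bar>conv_fun X K (f m) x - conv_fun X K (f m') x\<bar>
        \<le> (LK * B + BK * L) * measure lborel X * W2 m m'" .
  qed
qed

section \<open>The drift\<close>

lemma lipschitz_on_inverse_bounded_below:
  fixes \<pi> :: "'a::metric_space \<Rightarrow> real"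
  assumes "L-lipschitz_on X \<pi>" "0 < p" "\<forall>x\<in>X. p \<le> \<pi> x"
  shows "(L / p\<^sup>2)-lipschitz_on X (\<lambda>x. inverse (\<pi> x))"
proof (rule lipschitz_onI)
  fix x y assume xy: "x \<in> X" "y \<in> X"
  have p: "p \<le> \<pi> x" "p \<le> \<pi> y" using assms(3) xy by simp_all
  have "p\<^sup>2 \<le> \<pi> x * \<pi> y"
    unfolding power2_eq_square using p assms(2) by (intro mult_mono) simp_all
  moreover have "dist (\<pi> x) (\<pi> y) \<le> L * dist x y"
    using assms(1) xy by (rule lipschitz_onD)
  ultimately have "dist (\<pi> x) (\<pi> y) / (\<pi> x * \<pi> y) \<le> L * dist x y / p\<^sup>2"
    using assms(2) lipschitz_on_nonneg[OF assms(1)] by (intro frac_le) simp_all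
  moreover have "dist (inverse (\<pi> x)) (inverse (\<pi> y)) = dist (\<pi> x) (\<pi> y) / (\<pi> x * \<pi> y)"
    using p assms(2)
    by (simp add: dist_real_def inverse_diff_inverse abs_mult abs_minus_commute divide_inverse)
  ultimately show "dist (inverse (\<pi> x)) (inverse (\<pi> y)) \<le> L / p\<^sup>2 * dist x y"
    by simp
qed (use lipschitz_on_nonneg[OF assms(1)] in simp)

lemma assm_pi_bounded_below:
  assumes "compact X" "assm_pi X \<pi>"
  shows "\<exists>p>0. \<forall>x\<in>X. p \<le> \<pi> x"
proof (cases "X = {}")
  case True
  then show ?thesis by (intro exI[of _ 1]) simp
next
  case False
  obtain U L where U: "\<forall>x\<in>X. \<pi> x = exp (- U x)" and L: "L-lipschitz_on X \<pi>"
    using assms(2) unfolding assm_pi_def by blast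
  obtain x0 where "x0 \<in> X" "\<forall>x\<in>X. \<pi> x0 \<le> \<pi> x"
    using continuous_attains_inf[OF assms(1) False lipschitz_on_continuous_on[OF L]] by blast
  moreover have "0 < \<pi> x0" using U \<open>x0 \<in> X\<close> by simp
  ultimately show ?thesis by blast
qed

lemma bounded_lipschitz_field_drift:
  assumes "compact X" "assm_F X F dF" "assm_xi \<xi>" "assm_pi X \<pi>" "0 < \<epsilon>"
  shows "\<exists>B L. bounded_lipschitz_field X B L (drift X dF \<xi> \<pi> \<epsilon> \<sigma>)"
proof -
  define K where "K = K_eps X \<xi> \<epsilon>"
  obtain LK where LK: "LK-lipschitz_on UNIV K"
    using lipschitz_on_K_eps[OF assms(3,5)] unfolding K_def by blast
  obtain BK where BK: "\<forall>x\<in>X. \<forall>y\<in>X. \<bar>K (x - y)\<bar> \<le> BK"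
    using kernel_bounded_on_differences[OF assms(1) lipschitz_on_continuous_on[OF LK]] by blast
  obtain p where p: "0 < p" "\<forall>x\<in>X. p \<le> \<pi> x"
    using assm_pi_bounded_below[OF assms(1,4)] by blast
  obtain L\<pi> where L\<pi>: "L\<pi>-lipschitz_on X \<pi>"
    using assms(4) unfolding assm_pi_def by blast
  define f where "f m y = conv_meas K m y * inverse (\<pi> y)" for m y
  have "\<forall>x\<in>X. \<bar>inverse (\<pi> x)\<bar> \<le> inverse p"
    using p by (auto intro: le_imp_inverse_le order.strict_trans2)
  from bounded_lipschitz_field_mult[OF bounded_lipschitz_field_conv_meas[OF assms(1) LK BK]
      lipschitz_on_inverse_bounded_below[OF L\<pi> p] this]
  obtain Bf Lf where f: "bounded_lipschitz_field X Bf Lf f"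
    unfolding f_def by blast
  obtain Bg Lg where g: "bounded_lipschitz_field X Bg Lg (\<lambda>m. conv_fun X K (f m))"
    using bounded_lipschitz_field_conv_fun[OF assms(1) LK BK f] by blast
  have g_meas: "\<forall>m\<in>probs_on X. conv_fun X K (f m) \<in> borel_measurable borel"
  proof
    fix m assume "m \<in> probs_on X"
    then have "Lf-lipschitz_on X (f m)" using f by (simp add: bounded_lipschitz_field_def)
    then show "conv_fun X K (f m) \<in> borel_measurable borel"
      by (rule borel_measurable_conv_fun[OF assms(1) LK lipschitz_on_continuous_on])
  qed
  obtain BF LF where "bounded_lipschitz_field X BF LF dF"
    using assm_F_bounded_lipschitz_field[OF assms(2)] by blast
  note drift = bounded_lipschitz_field_diff[OF bounded_lipschitz_field_add[OF this
        bounded_lipschitz_field_cmult[OF g, of "2 * \<sigma>"]]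
      bounded_lipschitz_field_cmult[OF bounded_lipschitz_field_integral[OF assms(1) g g_meas],
        of "2 * \<sigma>"]]
  have "drift X dF \<xi> \<pi> \<epsilon> \<sigma>
      = (\<lambda>m x. dF m x + 2 * \<sigma> * conv_fun X K (f m) x - 2 * \<sigma> * (\<integral>z. conv_fun X K (f m) z \<partial>m))"
    by (simp add: fun_eq_iff drift_def Let_def K_def f_def[abs_def] divide_inverse)
  with drift show ?thesis by auto
qed

theorem mainTheorem7:
  fixes X :: "'a::euclidean_space set"
    and F :: "'a measure \<Rightarrow> real" and dF :: "'a measure \<Rightarrow> 'a \<Rightarrow> real"
    and \<xi> \<pi> :: "'a \<Rightarrow> real" and \<epsilon> \<sigma> :: real
  assumes "compact X"
    and "assm_F X F dF"
    and "assm_xi \<xi>"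
    and "assm_pi X \<pi>"
    and "\<epsilon> > 0" and "\<sigma> > 0"
  shows "\<exists>Ma>0. \<exists>La>0.
           (\<forall>m\<in>probs_on X. \<forall>x\<in>X. \<bar>drift X dF \<xi> \<pi> \<epsilon> \<sigma> m x\<bar> \<le> Ma)
         \<and> (\<forall>m\<in>probs_on X. \<forall>m'\<in>probs_on X. \<forall>x\<in>X. \<forall>y\<in>X.
              \<bar>drift X dF \<xi> \<pi> \<epsilon> \<sigma> m x - drift X dF \<xi> \<pi> \<epsilon> \<sigma> m' y\<bar>
                \<le> La * (norm (x - y) + W2 m m'))"
proof -
  obtain B L where "bounded_lipschitz_field X B L (drift X dF \<xi> \<pi> \<epsilon> \<sigma>)"
    using bounded_lipschitz_field_drift[OF assms(1-5)] by blast
  then have field: "bounded_lipschitz_field X (max B 1) (max L 1) (drift X dF \<xi> \<pi> \<epsilon> \<sigma>)"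
    by (rule bounded_lipschitz_field_mono) simp_all
  show ?thesis
  proof (intro exI conjI ballI)
    show "\<bar>drift X dF \<xi> \<pi> \<epsilon> \<sigma> m x\<bar> \<le> max B 1" if "m \<in> probs_on X" "x \<in> X" for m x
      using field that by (simp add: bounded_lipschitz_field_def)
    show "\<bar>drift X dF \<xi> \<pi> \<epsilon> \<sigma> m x - drift X dF \<xi> \<pi> \<epsilon> \<sigma> m' y\<bar>
        \<le> max L 1 * (norm (x - y) + W2 m m')"
      if "m \<in> probs_on X" "m' \<in> probs_on X" "x \<in> X" "y \<in> X" for m m' x y
      using field that by (rule bounded_lipschitz_field_joint)
  qed simp_all
qed

end
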